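(* Let $x^\star\in(0,1]$ and $F_f(y;x^\star)=\frac{ye^{(x^\star-2)y}+ye^{-x^\star y}}{2(1-e^{-2y})}$ for $y>0$. Then $F_f(\cdot;x^\star)$ is strictly decreasing on $(1/x^\star,\infty)$. *)

theory Defs
  imports Complex_Main
begin

definition F_f :: "real \<Rightarrow> real \<Rightarrow> real" where
  "F_f xs y = (y * exp ((xs - 2) * y) + y * exp (- xs * y)) / (2 * (1 - exp (-2 * y)))"

end

theory Submission
  imports Defs
begin

text \<open>Multiplying numerator and denominator by \<open>exp y\<close> turns \<open>F_f x\<close> into
  \<open>y cosh (b y) / (2 sinh y)\<close> with \<open>b = 1 - x\<close>. The numerator of its derivative is
  \<open>(cosh (b y) + b y sinh (b y)) sinh y - y cosh (b y) cosh y\<close>; bounding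
  \<open>sinh \<le> cosh\<close> twice reduces its negativity to \<open>1 + b y < y\<close>, i.e. to \<open>y > 1 / x\<close>.\<close>

lemma F_f_eq_cosh_sinh:
  fixes x y :: real
  shows "F_f x y = y * cosh ((1 - x) * y) / (2 * sinh y)"
proof -
  have "exp ((x - 2) * y) * exp y = exp (-((1 - x) * y))"
    "exp (- x * y) * exp y = exp ((1 - x) * y)"
    "exp (-2 * y) * exp y = exp (-y)"
    unfolding mult_exp_exp by (simp_all add: algebra_simps)
  hence num: "(exp ((x - 2) * y) + exp (- x * y)) * exp y = 2 * cosh ((1 - x) * y)"
    and den: "(1 - exp (-2 * y)) * exp y = 2 * sinh y"
    by (simp_all add: cosh_def sinh_def algebra_simps)
  have "F_f x y = (y * ((exp ((x - 2) * y) + exp (- x * y)) * exp y))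
                  / (2 * ((1 - exp (-2 * y)) * exp y))"
    unfolding F_f_def mult.assoc[symmetric] mult_divide_mult_cancel_right[OF exp_not_eq_zero]
    by (simp add: distrib_left)
  also have "\<dots> = y * cosh ((1 - x) * y) / (2 * sinh y)"
    by (simp only: num den)
  finally show ?thesis .
qed

lemma cosh_sinh_quotient_deriv_neg:
  fixes b y :: real
  assumes "0 \<le> b" and "b < 1" and "1 < (1 - b) * y"
  shows "(cosh (b * y) + b * y * sinh (b * y)) * sinh y < y * cosh (b * y) * cosh y"
proof -
  have "0 < y"
    using assms by (smt (verit) zero_less_mult_iff)
  have "b * y * sinh (b * y) \<le> b * y * cosh (b * y)"
    by (rule mult_left_mono[OF sinh_le_cosh_real]) (use assms \<open>0 < y\<close> in simp)
  hence "cosh (b * y) + b * y * sinh (b * y) \<le> (1 + b * y) * cosh (b * y)"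
    by (simp add: distrib_right)
  also have "\<dots> < y * cosh (b * y)"
    by (rule mult_strict_right_mono) (use assms(3) in \<open>simp_all add: algebra_simps\<close>)
  finally have "(cosh (b * y) + b * y * sinh (b * y)) * sinh y < y * cosh (b * y) * sinh y"
    using \<open>0 < y\<close> by (simp add: mult_strict_right_mono)
  also have "\<dots> < y * cosh (b * y) * cosh y"
    using \<open>0 < y\<close> by (simp add: sinh_less_cosh_real)
  finally show ?thesis .
qed

lemma strict_antimono_on_cosh_sinh_quotient:
  fixes b :: real
  assumes "0 \<le> b" and "b < 1"
  shows "strict_antimono_on {1 / (1 - b)<..} (\<lambda>y. y * cosh (b * y) / sinh y)"
proof (rule monotone_onI)
  fix u v :: real
  assume u: "u \<in> {1 / (1 - b)<..}" and "u < v"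
  show "v * cosh (b * v) / sinh v < u * cosh (b * u) / sinh u"
  proof (rule DERIV_neg_imp_decreasing[OF \<open>u < v\<close>])
    fix y assume "u \<le> y"
    hence "1 / (1 - b) < y"
      using u by simp
    hence "1 < (1 - b) * y"
      using assms by (simp add: field_simps)
    hence "0 < y"
      using assms by (smt (verit) zero_less_mult_iff)
    let ?D = "((cosh (b * y) + b * y * sinh (b * y)) * sinh y - y * cosh (b * y) * cosh y)
              / (sinh y * sinh y)"
    have "((\<lambda>y. y * cosh (b * y) / sinh y) has_real_derivative ?D) (at y)"
      by (rule derivative_eq_intros refl | use \<open>0 < y\<close> in simp)+
    moreover have "?D < 0"
      using cosh_sinh_quotient_deriv_neg[OF assms \<open>1 < (1 - b) * y\<close>] \<open>0 < y\<close>
      by (simp add: divide_neg_pos)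
    ultimately show "\<exists>D. ((\<lambda>y. y * cosh (b * y) / sinh y) has_real_derivative D) (at y) \<and> D < 0"
      by blast
  qed
qed

theorem mainTheorem9:
  fixes xs :: real
  assumes "0 < xs" and "xs \<le> 1"
  shows "strict_antimono_on {1 / xs<..} (F_f xs)"
proof (rule monotone_onI)
  fix u v assume "u \<in> {1 / xs<..}" and "v \<in> {1 / xs<..}" and "u < v"
  hence "v * cosh ((1 - xs) * v) / sinh v < u * cosh ((1 - xs) * u) / sinh u"
    using strict_antimono_on_cosh_sinh_quotient[of "1 - xs"] assms
    by (simp add: monotone_on_def)
  thus "F_f xs v < F_f xs u"
    unfolding F_f_eq_cosh_sinh divide_divide_eq_left'[symmetric]
    by (rule divide_strict_right_mono) simp_all
qed

end
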